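(* Let $a,b,c,d\geq 1$ be integers and $$M=\begin{pmatrix} a & b\\ c & d\end{pmatrix}.$$ Then $\mathrm{Cat}(M)\neq\emptyset$ in each of the following cases: (1) $a=b=c=d=1$; (2) $a=1$ and $d>bc$; (3) $d=1$ and $a>bc$; (4) $a>1$ and $d>1$. In all other cases $\mathrm{Cat}(M)=\emptyset$.
   Context: For an $n\times n$ matrix $M=(m_{ij})$ with entries in the natural numbers, $\mathrm{Cat}(M)$ denotes the collection of categories $A$ with exactly $n$ distinct objects $x_1,\dots,x_n$ such that $|A(x_i,x_j)|=m_{ij}$ for all $i,j$, where $A(x_i,x_j)$ is the set of morphisms from $x_i$ to $x_j$. *)

theory Defs
  imports Main
begin

text \<open>Hom i j is the set of morphisms from object i to object j,
  cmp i j k g f is the composite (g after f) of f : i -> j and g : j -> k,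
  ident i is the identity morphism of object i.\<close>

definition is_category ::
  "nat \<Rightarrow> (nat \<Rightarrow> nat \<Rightarrow> 'm set) \<Rightarrow> (nat \<Rightarrow> nat \<Rightarrow> nat \<Rightarrow> 'm \<Rightarrow> 'm \<Rightarrow> 'm) \<Rightarrow> (nat \<Rightarrow> 'm) \<Rightarrow> bool"
where
  "is_category n Hom cmp ident \<longleftrightarrow>
     (\<forall>i<n. ident i \<in> Hom i i) \<and>
     (\<forall>i<n. \<forall>j<n. \<forall>k<n. \<forall>f\<in>Hom i j. \<forall>g\<in>Hom j k. cmp i j k g f \<in> Hom i k) \<and>
     (\<forall>i<n. \<forall>j<n. \<forall>f\<in>Hom i j. cmp i j j (ident j) f = f \<and> cmp i i j f (ident i) = f) \<and>
     (\<forall>i<n. \<forall>j<n. \<forall>k<n. \<forall>l<n. \<forall>f\<in>Hom i j. \<forall>g\<in>Hom j k. \<forall>h\<in>Hom k l.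
        cmp i k l h (cmp i j k g f) = cmp i j l (cmp j k l h g) f)"

definition in_Cat ::
  "nat \<Rightarrow> (nat \<Rightarrow> nat \<Rightarrow> nat) \<Rightarrow> (nat \<Rightarrow> nat \<Rightarrow> 'm set) \<Rightarrow> (nat \<Rightarrow> nat \<Rightarrow> nat \<Rightarrow> 'm \<Rightarrow> 'm \<Rightarrow> 'm) \<Rightarrow> (nat \<Rightarrow> 'm) \<Rightarrow> bool"
where
  "in_Cat n M Hom cmp ident \<longleftrightarrow> is_category n Hom cmp ident \<and>
     (\<forall>i<n. \<forall>j<n. finite (Hom i j) \<and> card (Hom i j) = M i j)"

definition mat2 :: "nat \<Rightarrow> nat \<Rightarrow> nat \<Rightarrow> nat \<Rightarrow> nat \<Rightarrow> nat \<Rightarrow> nat" where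
  "mat2 a b c d = (\<lambda>i j. if i = 0 then (if j = 0 then a else b) else (if j = 0 then c else d))"

end

theory Submission
  imports Defs
begin

text \<open>If the object x has only its identity as endomorphism, every composite x \<rightarrow> y \<rightarrow> x is
  the identity. Either some composite y \<rightarrow> x \<rightarrow> y is the identity too, and then x \<cong> y forces all
  four hom-sets to be singletons; or (g, f) \<mapsto> f \<circ> g injects Hom(y,x) \<times> Hom(x,y) into the
  non-identity endomorphisms of y, whence d > b c. Conversely, when both objects have non-identity
  endomorphisms, all non-identity composites can be sent to a fixed morphism; and when a = 1 the
  endomorphisms of the second object can be taken to be the identity, the b c composites through
  the first object, and d - 1 - b c further elements that compose like one of these composites.
  The case d = 1 is the case a = 1 with the objects swapped.\<close>

locale small_category =
  fixes n :: nat and H :: "nat \<Rightarrow> nat \<Rightarrow> 'm set"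
    and cmp :: "nat \<Rightarrow> nat \<Rightarrow> nat \<Rightarrow> 'm \<Rightarrow> 'm \<Rightarrow> 'm" and ident :: "nat \<Rightarrow> 'm"
  assumes ident_closed: "i < n \<Longrightarrow> ident i \<in> H i i"
    and comp_closed: "\<lbrakk>i < n; j < n; k < n; f \<in> H i j; g \<in> H j k\<rbrakk> \<Longrightarrow> cmp i j k g f \<in> H i k"
    and left_ident: "\<lbrakk>i < n; j < n; f \<in> H i j\<rbrakk> \<Longrightarrow> cmp i j j (ident j) f = f"
    and right_ident: "\<lbrakk>i < n; j < n; f \<in> H i j\<rbrakk> \<Longrightarrow> cmp i i j f (ident i) = f"
    and assoc: "\<lbrakk>i < n; j < n; k < n; l < n; f \<in> H i j; g \<in> H j k; h \<in> H k l\<rbrakk> \<Longrightarrow>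
      cmp i k l h (cmp i j k g f) = cmp i j l (cmp j k l h g) f"

lemma small_category_iff_is_category: "small_category n H cmp ident \<longleftrightarrow> is_category n H cmp ident"
  unfolding small_category_def is_category_def by (intro iffI conjI allI impI ballI; simp)

context small_category
begin

context
  fixes x y assumes x: "x < n" and y: "y < n" and trivial_endo: "H x x = {ident x}"
begin

lemma comp_through_x_ident: "\<lbrakk>f \<in> H x y; g \<in> H y x\<rbrakk> \<Longrightarrow> cmp x y x g f = ident x"
  using comp_closed[OF x y x, of f g] trivial_endo by simp

lemma homs_trivial_if_section:
  assumes f: "f \<in> H x y" and g: "g \<in> H y x" and fg: "cmp y x y f g = ident y"
  shows "H x y = {f}" and "H y x = {g}" and "H y y = {ident y}"
proof -
  show Hxy: "H x y = {f}"
  proof (intro equalityI subsetI)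
    fix f' assume f': "f' \<in> H x y"
    have "f' = cmp x y y (cmp y x y f g) f'" using left_ident[OF x y f'] fg by simp
    also have "\<dots> = cmp x x y f (cmp x y x g f')" using assoc[OF x y x y f' g f] by simp
    also have "\<dots> = f" using comp_through_x_ident[OF f' g] right_ident[OF x y f] by simp
    finally show "f' \<in> {f}" by simp
  qed (use f in simp)
  show "H y x = {g}"
  proof (intro equalityI subsetI)
    fix g' assume g': "g' \<in> H y x"
    have "g' = cmp y y x g' (cmp y x y f g)" using right_ident[OF y x g'] fg by simp
    also have "\<dots> = cmp y x x (cmp x y x g' f) g" using assoc[OF y x y x g f g'] by simp
    also have "\<dots> = g" using comp_through_x_ident[OF f g'] left_ident[OF y x g] by simp
    finally show "g' \<in> {g}" by simp
  qed (use g in simp)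
  show "H y y = {ident y}"
  proof (intro equalityI subsetI)
    fix h assume h: "h \<in> H y y"
    have "h = cmp y y y h (cmp y x y f g)" using right_ident[OF y y h] fg by simp
    also have "\<dots> = cmp y x y (cmp x y y h f) g" using assoc[OF y x y y g f h] by simp
    also have "\<dots> = ident y" using comp_closed[OF x y y f h] Hxy fg by simp
    finally show "h \<in> {ident y}" by simp
  qed (use ident_closed[OF y] in simp)
qed

lemma comp_inj_on_if_no_section:
  assumes no_section: "\<forall>f\<in>H x y. \<forall>g\<in>H y x. cmp y x y f g \<noteq> ident y"
  shows "inj_on (\<lambda>(g, f). cmp y x y f g) (H y x \<times> H x y)"
    and "(\<lambda>(g, f). cmp y x y f g) ` (H y x \<times> H x y) \<subseteq> H y y - {ident y}"
proof -
  show "inj_on (\<lambda>(g, f). cmp y x y f g) (H y x \<times> H x y)"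
  proof (rule inj_onI, clarsimp)
    fix g f g' f'
    assume g: "g \<in> H y x" and f: "f \<in> H x y" and g': "g' \<in> H y x" and f': "f' \<in> H x y"
      and eq: "cmp y x y f g = cmp y x y f' g'"
    have "g = cmp y x x (cmp x y x g f) g"
      using comp_through_x_ident[OF f g] left_ident[OF y x g] by simp
    also have "\<dots> = cmp y y x g (cmp y x y f' g')" using assoc[OF y x y x g f g] eq by simp
    also have "\<dots> = cmp y x x (cmp x y x g f') g'" using assoc[OF y x y x g' f' g] by simp
    also have "\<dots> = g'" using comp_through_x_ident[OF f' g] left_ident[OF y x g'] by simp
    finally have "g = g'" .
    have "f = cmp x x y f (cmp x y x g f)"
      using comp_through_x_ident[OF f g] right_ident[OF x y f] by simp
    also have "\<dots> = cmp x y y (cmp y x y f' g') f" using assoc[OF x y x y f g f] eq by simp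
    also have "\<dots> = cmp x x y f' (cmp x y x g' f)" using assoc[OF x y x y f g' f'] by simp
    also have "\<dots> = f'" using comp_through_x_ident[OF f g'] right_ident[OF x y f'] by simp
    finally show "g = g' \<and> f = f'" using \<open>g = g'\<close> by simp
  qed
  show "(\<lambda>(g, f). cmp y x y f g) ` (H y x \<times> H x y) \<subseteq> H y y - {ident y}"
    using comp_closed[OF y x y] no_section by auto
qed

lemma card_endo_gt_card_homs:
  assumes fin: "finite (H y y)" "finite (H x y)" "finite (H y x)"
  shows "card (H x y) * card (H y x) < card (H y y) \<or>
         (card (H y y) = 1 \<and> card (H x y) = 1 \<and> card (H y x) = 1)"
proof (cases "\<exists>f\<in>H x y. \<exists>g\<in>H y x. cmp y x y f g = ident y")
  case True
  then obtain f g where split_pair: "f \<in> H x y" "g \<in> H y x" "cmp y x y f g = ident y" by blast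
  show ?thesis using homs_trivial_if_section[OF split_pair] by simp
next
  case False
  then have "card (H y x \<times> H x y) \<le> card (H y y - {ident y})"
    using card_inj_on_le[OF comp_inj_on_if_no_section] fin by simp
  moreover have "card (H y y - {ident y}) < card (H y y)"
    using card_Diff1_less[OF fin(1) ident_closed[OF y]] .
  ultimately show ?thesis by (simp add: card_cartesian_product mult.commute)
qed

end

end

lemma in_Cat_cong:
  "(\<And>i j. \<lbrakk>i < n; j < n\<rbrakk> \<Longrightarrow> M i j = M' i j) \<Longrightarrow> in_Cat n M H cmp ident = in_Cat n M' H cmp ident"
  unfolding in_Cat_def by auto

lemma in_Cat_reindex:
  assumes "in_Cat n M H cmp ident" and \<pi>: "\<And>i. i < m \<Longrightarrow> \<pi> i < n"
  shows "in_Cat m (\<lambda>i j. M (\<pi> i) (\<pi> j)) (\<lambda>i j. H (\<pi> i) (\<pi> j))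
           (\<lambda>i j k. cmp (\<pi> i) (\<pi> j) (\<pi> k)) (\<lambda>i. ident (\<pi> i))"
  using assms unfolding in_Cat_def is_category_def by (simp add: \<pi>)

lemma all_less_2: "(\<forall>i < (2::nat). P i) \<longleftrightarrow> P 0 \<and> P 1"
  by (auto simp: less_Suc_eq numeral_2_eq_2)

lemma in_Cat_mat2_all_one: "in_Cat 2 (mat2 1 1 1 1) (\<lambda>i j. {0::nat}) (\<lambda>i j k g f. 0) (\<lambda>i. 0)"
  unfolding in_Cat_def is_category_def all_less_2 mat2_def by simp

text \<open>Morphisms i \<rightarrow> j are 0, ..., M i j - 1 with 0 the identity on the diagonal; a composite of two
  non-identities is 1 on the diagonal (available since M i i \<ge> 2) and 0 elsewhere.\<close>

definition collapsing_comp :: "nat \<Rightarrow> nat \<Rightarrow> nat \<Rightarrow> nat \<Rightarrow> nat \<Rightarrow> nat" where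
  "collapsing_comp i j k g f =
     (if i = j \<and> f = 0 then g else if j = k \<and> g = 0 then f else if i = k then 1 else 0)"

lemma in_Cat_collapsing_comp:
  assumes "\<forall>i<n. \<forall>j<n. 1 \<le> M i j" and "\<forall>i<n. 2 \<le> M i i"
  shows "in_Cat n M (\<lambda>i j. {0..<M i j}) collapsing_comp (\<lambda>i. 0)"
  using assms unfolding in_Cat_def is_category_def collapsing_comp_def by (auto simp: Suc_le_eq)

text \<open>The category for a = 1, with 0 as every identity: the composite g \<circ> f of f \<in> Hom(1,0) = {0..<c}
  and g \<in> Hom(0,1) = {0..<b} is the endomorphism g c + f + 1 \<in> {1..b c} of object 1. Every
  non-identity endomorphism h of object 1 is treated as such a composite, decoded as
  (code_fst h, code_snd h); the extra codes h > b c decode as (0, 0).\<close>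

definition pair_code :: "nat \<Rightarrow> nat \<Rightarrow> nat \<Rightarrow> nat" where
  "pair_code c f g = f * c + g + 1"

definition code_index :: "nat \<Rightarrow> nat \<Rightarrow> nat \<Rightarrow> nat" where
  "code_index b c h = (if h - 1 < b * c then h - 1 else 0)"

definition code_fst :: "nat \<Rightarrow> nat \<Rightarrow> nat \<Rightarrow> nat" where
  "code_fst b c h = code_index b c h div c"

definition code_snd :: "nat \<Rightarrow> nat \<Rightarrow> nat \<Rightarrow> nat" where
  "code_snd b c h = code_index b c h mod c"

lemma code_fst_less: "\<lbrakk>1 \<le> b; 1 \<le> c\<rbrakk> \<Longrightarrow> code_fst b c h < b"
  unfolding code_fst_def code_index_def by (simp add: less_mult_imp_div_less)

lemma code_snd_less: "1 \<le> c \<Longrightarrow> code_snd b c h < c"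
  unfolding code_snd_def by simp

lemma pair_code_le: assumes "f < b" "g < c" shows "pair_code c f g \<le> b * c"
proof -
  have "Suc f * c \<le> b * c" using assms(1) by (intro mult_le_mono1) simp
  then show ?thesis using assms(2) unfolding pair_code_def by simp
qed

lemma pair_code_nonzero: "pair_code c f g \<noteq> 0"
  unfolding pair_code_def by simp

lemma code_index_pair_code: "\<lbrakk>f < b; g < c\<rbrakk> \<Longrightarrow> code_index b c (pair_code c f g) = f * c + g"
  using pair_code_le unfolding code_index_def pair_code_def by fastforce

lemma code_fst_pair_code: "\<lbrakk>f < b; g < c\<rbrakk> \<Longrightarrow> code_fst b c (pair_code c f g) = f"
  unfolding code_fst_def by (simp add: code_index_pair_code)

lemma code_snd_pair_code: "\<lbrakk>f < b; g < c\<rbrakk> \<Longrightarrow> code_snd b c (pair_code c f g) = g"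
  unfolding code_snd_def by (simp add: code_index_pair_code)

definition coded_comp :: "nat \<Rightarrow> nat \<Rightarrow> nat \<Rightarrow> nat \<Rightarrow> nat \<Rightarrow> nat \<Rightarrow> nat \<Rightarrow> nat" where
  "coded_comp b c i j k g f =
    (if j = 0 then (if i = 0 then g else if k = 0 then f else pair_code c g f)
     else if i = 0 \<and> k = 0 then 0
     else if i = 0 then (if g = 0 then f else code_fst b c g)
     else if k = 0 then (if f = 0 then g else code_snd b c f)
     else if g = 0 then f else if f = 0 then g else pair_code c (code_fst b c g) (code_snd b c f))"

lemma less_2_cases: "(i::nat) < 2 \<Longrightarrow> i = 0 \<or> i = 1"
  by auto

lemma coded_comp_assoc:
  assumes bc: "1 \<le> b" "1 \<le> c" and ijkl: "i < 2" "j < 2" "k < 2" "l < 2"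
    and fgh: "f < mat2 1 b c d i j" "g < mat2 1 b c d j k" "h < mat2 1 b c d k l"
  shows "coded_comp b c i k l h (coded_comp b c i j k g f) = coded_comp b c i j l (coded_comp b c j k l h g) f"
  using less_2_cases[OF ijkl(1)] less_2_cases[OF ijkl(2)] less_2_cases[OF ijkl(3)]
    less_2_cases[OF ijkl(4)] fgh
  by (elim disjE) (simp_all add: mat2_def coded_comp_def pair_code_nonzero
      pair_code_nonzero[unfolded neq0_conv] code_fst_pair_code
      code_snd_pair_code code_fst_less[OF bc] code_snd_less[OF bc(2)])

lemma coded_comp_closed:
  assumes bc: "1 \<le> b" "1 \<le> c" "b * c < d" and ijk: "i < 2" "j < 2" "k < 2"
    and fg: "f < mat2 1 b c d i j" "g < mat2 1 b c d j k"
  shows "coded_comp b c i j k g f < mat2 1 b c d i k"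
proof -
  have "pair_code c f g < d" if "f < b" "g < c" for f g
    using pair_code_le[OF that] bc(3) by simp
  then show ?thesis
    using less_2_cases[OF ijk(1)] less_2_cases[OF ijk(2)] less_2_cases[OF ijk(3)] fg bc
    by (elim disjE) (simp_all add: mat2_def coded_comp_def code_fst_less code_snd_less)
qed

lemma in_Cat_mat2_coded_comp:
  assumes bc: "1 \<le> b" "1 \<le> c" "b * c < d"
  shows "in_Cat 2 (mat2 1 b c d) (\<lambda>i j. {0..<mat2 1 b c d i j}) (coded_comp b c) (\<lambda>i. 0)"
  unfolding in_Cat_def is_category_def
  using coded_comp_closed[OF bc] coded_comp_assoc[OF bc(1,2)] bc
  by (simp add: all_less_2) (simp add: mat2_def coded_comp_def)

lemma mat2_transpose: "\<lbrakk>i < 2; j < 2\<rbrakk> \<Longrightarrow> mat2 d c b a (1 - i) (1 - j) = mat2 a b c d i j"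
  using less_2_cases[of i] less_2_cases[of j] unfolding mat2_def by auto

lemma Cat_mat2_nonempty:
  assumes "1 \<le> a" "1 \<le> b" "1 \<le> c" "1 \<le> d"
    and "(a = 1 \<and> b = 1 \<and> c = 1 \<and> d = 1) \<or> (a = 1 \<and> d > b * c) \<or> (d = 1 \<and> a > b * c)
           \<or> (a > 1 \<and> d > 1)"
  shows "\<exists>(Hom :: nat \<Rightarrow> nat \<Rightarrow> nat set) cmp ident. in_Cat 2 (mat2 a b c d) Hom cmp ident"
  using assms(5)
proof (elim disjE conjE)
  assume "d = 1" "b * c < a"
  then have "in_Cat 2 (mat2 d c b a) (\<lambda>i j. {0..<mat2 1 c b a i j}) (coded_comp c b) (\<lambda>i. 0)"
    using in_Cat_mat2_coded_comp[of c b a] assms(2,3) by (simp add: mult.commute)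
  then have "in_Cat 2 (\<lambda>i j. mat2 d c b a (1 - i) (1 - j)) (\<lambda>i j. {0..<mat2 1 c b a (1 - i) (1 - j)})
      (\<lambda>i j k. coded_comp c b (1 - i) (1 - j) (1 - k)) (\<lambda>i. 0)"
    by (rule in_Cat_reindex) simp
  then show ?thesis by (subst (asm) in_Cat_cong[OF mat2_transpose]) auto
next
  assume "1 < a" "1 < d"
  then have "in_Cat 2 (mat2 a b c d) (\<lambda>i j. {0..<mat2 a b c d i j}) collapsing_comp (\<lambda>i. 0)"
    using assms(1-4) by (intro in_Cat_collapsing_comp) (auto simp: mat2_def all_less_2)
  then show ?thesis by blast
qed (use in_Cat_mat2_all_one in_Cat_mat2_coded_comp assms(2,3) in blast)+

lemma in_Cat_mat2_conditions:
  assumes "1 \<le> a" "1 \<le> d" and cat: "in_Cat 2 (mat2 a b c d) H cmp ident"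
  shows "(a = 1 \<and> b = 1 \<and> c = 1 \<and> d = 1) \<or> (a = 1 \<and> d > b * c) \<or> (d = 1 \<and> a > b * c)
           \<or> (a > 1 \<and> d > 1)"
proof -
  interpret small_category 2 H cmp ident
    using cat by (simp add: in_Cat_def small_category_iff_is_category)
  have fin: "finite (H 0 0)" "finite (H 0 1)" "finite (H 1 0)" "finite (H 1 1)"
    and card: "card (H 0 0) = a" "card (H 0 1) = b" "card (H 1 0) = c" "card (H 1 1) = d"
    using cat unfolding in_Cat_def all_less_2 mat2_def by simp_all
  have trivial_endo: "H i i = {ident i}" if "i < 2" "card (H i i) = 1" for i
    using ident_closed[OF that(1)] that(2) by (metis card_1_singletonE singletonD)
  consider "a = 1" | "d = 1" | "1 < a \<and> 1 < d" using assms(1,2) by linarith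
  then show ?thesis
  proof cases
    case 1
    then show ?thesis
      using card_endo_gt_card_homs[of 0 1] trivial_endo[of 0] fin card by auto
  next
    case 2
    then show ?thesis
      using card_endo_gt_card_homs[of 1 0] trivial_endo[of 1] fin card by (auto simp: mult.commute)
  qed simp
qed

theorem mainTheorem2:
  fixes a b c d :: nat
  assumes "a \<ge> 1" "b \<ge> 1" "c \<ge> 1" "d \<ge> 1"
  shows "(((a = 1 \<and> b = 1 \<and> c = 1 \<and> d = 1) \<or> (a = 1 \<and> d > b * c) \<or> (d = 1 \<and> a > b * c)
            \<or> (a > 1 \<and> d > 1))
           \<longrightarrow> (\<exists>(Hom :: nat \<Rightarrow> nat \<Rightarrow> nat set) cmp ident. in_Cat 2 (mat2 a b c d) Hom cmp ident))
       \<and> (\<not> ((a = 1 \<and> b = 1 \<and> c = 1 \<and> d = 1) \<or> (a = 1 \<and> d > b * c) \<or> (d = 1 \<and> a > b * c)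
            \<or> (a > 1 \<and> d > 1))
           \<longrightarrow> \<not> (\<exists>(Hom :: nat \<Rightarrow> nat \<Rightarrow> 'm set) cmp ident. in_Cat 2 (mat2 a b c d) Hom cmp ident))"
  using Cat_mat2_nonempty[OF assms] in_Cat_mat2_conditions[OF assms(1,4)] by blast

end
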